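(* Let $i,p,q\ge-1$ and let $v\in C([0,1],L(\mathbb{R}^d,\mathbb{R}^n))$, $w\in C([0,1],\mathbb{R}^d)$. If $p\vee q\le i$, then \[ \|\Delta_i(\Delta_pv\,\Delta_qw)\|_\infty\lesssim 2^{-(i\vee p\vee q)-i+p+q}\|\Delta_pv\|_\infty\|\Delta_qw\|_\infty, \] except when $i=q>p$ or $i=p>q$, in which case one only has $\|\Delta_i(\Delta_pv\,\Delta_qw)\|_\infty\lesssim\|\Delta_pv\|_\infty\|\Delta_qw\|_\infty$. If $p>i$ or $q>i$, then $\Delta_i(\Delta_pv\,\Delta_qw)\equiv0$.
   Context: Index set: pairs $(p,m)$ with either $p=-1,m=0$, or $p\in\mathbb{N}=\{0,1,2,\dots\}$ and $0\le m\le 2^p$. For $p\in\mathbb{N}$, $1\le m\le 2^p$ set $t^0_{pm}=(m-1)2^{-p}$, $t^1_{pm}=(2m-1)2^{-p-1}$, $t^2_{pm}=m2^{-p}$. Rescaled Haar functions: for $p\in\mathbb{N}$, $1\le m\le 2^p$, $\chi_{pm}=2^p$ on $[t^0_{pm},t^1_{pm})$, $=-2^p$ on $[t^1_{pm},t^2_{pm})$, $=0$ elsewhere; $\chi_{00}\equiv1$; $\chi_{p0}\equiv0$ for $p\ge1$. Rescaled Schauder functions: $\varphi_{pm}(t)=\int_0^t\chi_{pm}(s)\,ds$ for $p\in\mathbb{N}$, and $\varphi_{-10}\equiv1$. For continuous $f:[0,1]\to E$ ($E$ a finite-dimensional normed space), coefficients: $f_{-10}=f(0)$, $f_{00}=f(1)-f(0)$,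 $f_{p0}=0$ for $p\ge1$, $f_{pm}=2f(t^1_{pm})-f(t^0_{pm})-f(t^2_{pm})$ for $p\in\mathbb{N},m\ge1$. Schauder blocks: $\Delta_pf=\sum_{m=0}^{2^p}f_{pm}\varphi_{pm}$ for $p\ge-1$. $\|\cdot\|_\infty$ is the sup norm; $a\vee b=\max(a,b)$; $\lesssim$ hides a constant independent of $i,p,q,v,w$. *)

theory Defs
  imports "HOL-Analysis.Analysis"
begin

definition tt0 :: "nat \<Rightarrow> nat \<Rightarrow> real" where
  "tt0 p m = (real m - 1) / 2 ^ p"
definition tt1 :: "nat \<Rightarrow> nat \<Rightarrow> real" where
  "tt1 p m = (2 * real m - 1) / 2 ^ (p + 1)"
definition tt2 :: "nat \<Rightarrow> nat \<Rightarrow> real" where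
  "tt2 p m = real m / 2 ^ p"

definition haar :: "nat \<Rightarrow> nat \<Rightarrow> real \<Rightarrow> real" where
  "haar p m t =
     (if m = 0 then (if p = 0 then 1 else 0)
      else if tt0 p m \<le> t \<and> t < tt1 p m then 2 ^ p
      else if tt1 p m \<le> t \<and> t < tt2 p m then - (2 ^ p)
      else 0)"

definition schauder :: "int \<Rightarrow> nat \<Rightarrow> real \<Rightarrow> real" where
  "schauder p m t = (if p = -1 then 1 else integral {0..t} (haar (nat p) m))"

definition schauder_idx :: "int \<Rightarrow> nat set" where
  "schauder_idx p = (if p = -1 then {0} else {0..2 ^ nat p})"

definition schauder_coeff :: "(real \<Rightarrow> 'a::real_normed_vector) \<Rightarrow> int \<Rightarrow> nat \<Rightarrow> 'a" where
  "schauder_coeff f p m =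
     (if p = -1 then (if m = 0 then f 0 else 0)
      else if m = 0 then (if p = 0 then f 1 - f 0 else 0)
      else 2 *\<^sub>R f (tt1 (nat p) m) - f (tt0 (nat p) m) - f (tt2 (nat p) m))"

definition schauder_block :: "int \<Rightarrow> (real \<Rightarrow> 'a::real_normed_vector) \<Rightarrow> real \<Rightarrow> 'a" where
  "schauder_block p f t = (\<Sum>m\<in>schauder_idx p. schauder p m t *\<^sub>R schauder_coeff f p m)"

definition supnorm01 :: "(real \<Rightarrow> 'a::real_normed_vector) \<Rightarrow> real" where
  "supnorm01 g = (SUP t\<in>{0..1}. norm (g t))"

end

theory Submission
  imports Defs
begin

text \<open>
  For \<open>p \<ge> 0\<close> and \<open>m \<ge> 1\<close> the Schauder function \<open>\<phi>\<^sub>p\<^sub>m\<close> is a tent of height 1/2 over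
  \<open>[t\<^sup>0\<^sub>p\<^sub>m, t\<^sup>2\<^sub>p\<^sub>m]\<close>. Hence \<open>\<Delta>\<^sub>p f\<close> is affine on every dyadic interval of length \<open>2\<^sup>-\<^sup>(\<^sup>p\<^sup>+\<^sup>1\<^sup>)\<close> and
  vanishes on the grid \<open>2\<^sup>-\<^sup>p \<int>\<close> (for \<open>p \<ge> 1\<close>), and since the tents of one level have disjoint
  supports, \<open>\<parallel>\<Delta>\<^sub>i g\<parallel>\<^sub>\<infinity>\<close> is at most twice the largest coefficient of \<open>g\<close> at level \<open>i\<close>.

  If \<open>p > i\<close> or \<open>q > i\<close>, the product \<open>\<Delta>\<^sub>p v \<Delta>\<^sub>q w\<close> vanishes at every point where a level-\<open>i\<close>
  coefficient is evaluated, so its \<open>i\<close>-th block is zero. Otherwise each coefficient is crudely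
  bounded by \<open>4 \<parallel>\<Delta>\<^sub>p v\<parallel>\<^sub>\<infinity> \<parallel>\<Delta>\<^sub>q w\<parallel>\<^sub>\<infinity>\<close>, which settles the exceptional cases and \<open>p = q = i\<close>. If
  \<open>p, q < i\<close>, both factors are affine on each \<open>[t\<^sup>0\<^sub>i\<^sub>m, t\<^sup>2\<^sub>i\<^sub>m]\<close>, so the second difference of the
  product is \<open>-\<onehalf> \<delta>v \<delta>w\<close> with \<open>|\<delta>v| \<le> 2\<^sup>p\<^sup>+\<^sup>2\<^sup>-\<^sup>i \<parallel>\<Delta>\<^sub>p v\<parallel>\<^sub>\<infinity>\<close>; this gives the factor \<open>2\<^sup>p\<^sup>+\<^sup>q\<^sup>-\<^sup>2\<^sup>i\<close>.
\<close>

section \<open>Functions affine on a set of reals\<close>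

definition affine_on :: "real set \<Rightarrow> (real \<Rightarrow> 'a::real_vector) \<Rightarrow> bool" where
  "affine_on S g \<longleftrightarrow> (\<exists>c d. \<forall>u\<in>S. g u = c + u *\<^sub>R d)"

lemma affine_onI: "(\<And>u. u \<in> S \<Longrightarrow> g u = c + u *\<^sub>R d) \<Longrightarrow> affine_on S g"
  unfolding affine_on_def by blast

lemma affine_on_sum:
  assumes "\<And>m. m \<in> M \<Longrightarrow> affine_on S (g m)"
  shows "affine_on S (\<lambda>u. \<Sum>m\<in>M. g m u)"
proof (cases "finite M")
  case True
  from assms obtain c d where "\<And>m u. m \<in> M \<Longrightarrow> u \<in> S \<Longrightarrow> g m u = c m + u *\<^sub>R d m"
    unfolding affine_on_def by metis
  then show ?thesis
    by (intro affine_onI[where c = "\<Sum>m\<in>M. c m" and d = "\<Sum>m\<in>M. d m"])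
       (simp add: sum.distrib scaleR_sum_right)
qed (simp add: affine_onI[where c = 0 and d = 0])

lemma affine_on_scaleR_left:
  assumes "affine_on S g"
  shows "affine_on S (\<lambda>u. g u *\<^sub>R x)"
proof -
  from assms obtain c d where "\<And>u. u \<in> S \<Longrightarrow> g u = c + u * d"
    unfolding affine_on_def by auto
  then show ?thesis
    by (intro affine_onI[where c = "c *\<^sub>R x" and d = "d *\<^sub>R x"]) (simp add: scaleR_add_left)
qed

lemma affine_on_compose_affine:
  assumes "affine_on T h" and "\<And>t. t \<in> S \<Longrightarrow> \<alpha> * t + \<beta> \<in> T"
  shows "affine_on S (\<lambda>t. h (\<alpha> * t + \<beta>))"
proof -
  from assms(1) obtain c d where "\<And>u. u \<in> T \<Longrightarrow> h u = c + u *\<^sub>R d"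
    unfolding affine_on_def by auto
  with assms(2) show ?thesis
    by (intro affine_onI[where c = "c + \<beta> *\<^sub>R d" and d = "\<alpha> *\<^sub>R d"]) (simp add: algebra_simps)
qed

lemma affine_on_midpoint:
  assumes "affine_on S g" "x \<in> S" "y \<in> S" "(x + y) / 2 \<in> S"
  shows "2 *\<^sub>R g ((x + y) / 2) = g x + g y"
proof -
  from assms(1) obtain c d where g: "\<And>u. u \<in> S \<Longrightarrow> g u = c + u *\<^sub>R d"
    unfolding affine_on_def by auto
  have "2 *\<^sub>R (c + ((x + y) / 2) *\<^sub>R d) = 2 *\<^sub>R c + (x + y) *\<^sub>R d"
    by (simp add: scaleR_add_right)
  then show ?thesis
    using assms(2-4) by (simp add: g scaleR_add_left scaleR_2 add_ac)
qed

lemma affine_on_diff: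
  assumes "affine_on S g" "x \<in> S" "y \<in> S" "a \<in> S" "b \<in> S" "a \<noteq> b"
  shows "g y - g x = ((y - x) / (b - a)) *\<^sub>R (g b - g a)"
proof -
  from assms(1) obtain c d where "\<And>u. u \<in> S \<Longrightarrow> g u = c + u *\<^sub>R d"
    unfolding affine_on_def by auto
  with assms(2-6) show ?thesis
    by (simp add: scaleR_diff_left[symmetric])
qed

section \<open>Schauder functions as tents\<close>

definition tent :: "real \<Rightarrow> real" where
  "tent y = max 0 (1/2 - \<bar>y - 1/2\<bar>)"

lemma tent_nonneg: "0 \<le> tent y"
  by (simp add: tent_def)

lemma tent_le_half: "tent y \<le> 1/2"
  by (simp add: tent_def max_def)

lemma tent_of_int: "tent (of_int j) = 0"
proof -
  have "j \<le> 0 \<or> 1 \<le> j" by linarith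
  then have "real_of_int j \<le> 0 \<or> 1 \<le> real_of_int j" by linarith
  then show ?thesis by (auto simp: tent_def max_def)
qed

lemma tent_pos_unique:
  assumes "0 < tent (y - real j)" "0 < tent (y - real k)"
  shows "j = k"
proof -
  have "\<bar>y - real j - 1/2\<bar> < 1/2" "\<bar>y - real k - 1/2\<bar> < 1/2"
    using assms by (auto simp: tent_def max_def split: if_splits)
  then have "real j < real k + 1" "real k < real j + 1"
    unfolding abs_less_iff by linarith+
  then show ?thesis
    by linarith
qed

lemma affine_on_tent_half_interval: "affine_on {of_int k / 2 .. (of_int k + 1) / 2} tent"
proof -
  consider "k \<le> -1" | "k = 0" | "k = 1" | "2 \<le> k" by linarith
  then show ?thesis
  proof cases
    case 1
    then have "real_of_int k + 1 \<le> 0" by linarith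
    then show ?thesis
      by (intro affine_onI[where c = 0 and d = 0]) (auto simp: tent_def max_def)
  next
    case 2
    then show ?thesis
      by (intro affine_onI[where c = 0 and d = 1]) (auto simp: tent_def max_def abs_if)
  next
    case 3
    then show ?thesis
      by (intro affine_onI[where c = 1 and d = "-1"]) (auto simp: tent_def max_def abs_if)
  next
    case 4
    then have "1 \<le> real_of_int k / 2" by linarith
    then show ?thesis
      by (intro affine_onI[where c = 0 and d = 0]) (auto simp: tent_def max_def)
  qed
qed

lemma integral_const_on_subinterval:
  fixes a b c t :: real
  assumes "0 \<le> a"
  shows "integral {0..t} (\<lambda>s. if s \<in> {a..b} then c else 0) = max 0 (min t b - a) * c"
proof -
  have "integral {0..t} (\<lambda>s. if s \<in> {a..b} then c else 0) = integral ({a..b} \<inter> {0..t}) (\<lambda>s. c)"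
    by (rule integral_restrict_Int)
  also have "{a..b} \<inter> {0..t} = {a..min t b}"
    using assms by auto
  also have "integral {a..min t b} (\<lambda>s. c) = max 0 (min t b - a) * c"
    by (simp add: integral_const_real) (auto simp: max_def min_def)
  finally show ?thesis .
qed

lemma const_on_subinterval_integrable:
  fixes a b c t :: real
  shows "(\<lambda>s. if s \<in> {a..b} then c else 0) integrable_on {0..t}"
proof -
  have "(\<lambda>s. c) integrable_on ({a..b} \<inter> {0..t})"
    by (simp add: Int_atLeastAtMost integrable_const_ivl)
  then show ?thesis
    by (simp only: integrable_restrict_Int)
qed

lemma schauder_eq_tent:
  assumes m: "1 \<le> m"
  shows "schauder (int p) m t = tent (2^p * t + 1 - real m)"
proof -
  define c :: real where "c = 2^p"
  define a0 a1 a2 where "a0 = tt0 p m" and "a1 = tt1 p m" and "a2 = tt2 p m"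
  have c: "0 < c"
    by (simp add: c_def)
  have ca: "c * a0 = real m - 1" "c * a1 = real m - 1/2" "c * a2 = real m"
    unfolding c_def a0_def a1_def a2_def by (simp_all add: tt0_def tt1_def tt2_def)
  then have "c * a0 < c * a1" "c * a1 < c * a2"
    by simp_all
  then have "a0 < a1" "a1 < a2"
    using c by simp_all
  have "0 \<le> a0" "0 \<le> a1"
    using m by (simp_all add: a0_def a1_def tt0_def tt1_def)
  have "integral {0..t} (haar p m)
      = integral {0..t} (\<lambda>s. (if s \<in> {a0..a1} then c else 0) - (if s \<in> {a1..a2} then c else 0))"
  proof (rule integral_spike[where S = "{a1, a2}"])
    fix s
    assume "s \<in> {0..t} - {a1, a2}"
    then show "(if s \<in> {a0..a1} then c else 0) - (if s \<in> {a1..a2} then c else 0) = haar p m s"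
      using m \<open>a0 < a1\<close> \<open>a1 < a2\<close> unfolding haar_def a0_def a1_def a2_def c_def by auto
  qed simp
  also have "\<dots> = max 0 (min t a1 - a0) * c - max 0 (min t a2 - a1) * c"
    by (subst integral_diff[OF const_on_subinterval_integrable const_on_subinterval_integrable])
      (simp only: integral_const_on_subinterval \<open>0 \<le> a0\<close> \<open>0 \<le> a1\<close>)
  also have "\<dots> = max 0 (min (c * t) (c * a1) - c * a0) - max 0 (min (c * t) (c * a2) - c * a1)"
  proof -
    have "max 0 (min t b - a) * c = max 0 (min (c * t) (c * b) - c * a)" for a b
    proof -
      have "min (c * t) (c * b) = c * min t b"
        using c by (simp add: min_mult_distrib_left)
      moreover have "max 0 (c * min t b - c * a) = c * max 0 (min t b - a)"
        using c by (simp add: max_mult_distrib_left right_diff_distrib)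
      ultimately show ?thesis
        by (simp add: mult.commute)
    qed
    then show ?thesis
      by (simp only:)
  qed
  also have "\<dots> = tent (c * t + 1 - real m)"
    unfolding ca by (simp add: tent_def max_def min_def abs_if)
  finally show ?thesis
    by (simp add: schauder_def c_def)
qed

lemma schauder_minus_one [simp]: "schauder (-1) m t = 1"
  by (simp add: schauder_def)

lemma schauder_0_0: "0 \<le> t \<Longrightarrow> schauder 0 0 t = t"
proof -
  have "haar 0 0 = (\<lambda>_. 1)"
    by (simp add: haar_def fun_eq_iff)
  then show "0 \<le> t \<Longrightarrow> ?thesis"
    by (simp add: schauder_def)
qed

lemma schauder_index_0_eq_0: "1 \<le> p \<Longrightarrow> schauder (int p) 0 t = 0"
proof -
  have "1 \<le> p \<Longrightarrow> haar p 0 = (\<lambda>_. 0)"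
    by (simp add: haar_def fun_eq_iff)
  then show "1 \<le> p \<Longrightarrow> ?thesis"
    by (simp add: schauder_def)
qed

lemma affine_on_schauder:
  "affine_on {real k / 2^(p+1) .. (real k + 1) / 2^(p+1)} (schauder (int p) m)"
proof (cases "1 \<le> m")
  case True
  let ?j = "int k + 2 - 2 * int m"
  have "affine_on {real k / 2^(p+1) .. (real k + 1) / 2^(p+1)} (\<lambda>t. tent (2^p * t + (1 - real m)))"
  proof (rule affine_on_compose_affine[OF affine_on_tent_half_interval[of ?j]])
    fix t assume "t \<in> {real k / 2^(p+1) .. (real k + 1) / 2^(p+1)}"
    then have "real k / 2 \<le> 2^p * t" "2^p * t \<le> (real k + 1) / 2"
      by (simp_all add: field_simps)
    then show "2^p * t + (1 - real m) \<in> {of_int ?j / 2 .. (of_int ?j + 1) / 2}"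
      by simp
  qed
  moreover have "schauder (int p) m = (\<lambda>t. tent (2^p * t + (1 - real m)))"
    by (simp add: fun_eq_iff schauder_eq_tent[OF True] add_diff_eq)
  ultimately show ?thesis
    by simp
next
  case False
  then have "m = 0"
    by simp
  show ?thesis
  proof (cases "p = 0")
    case True
    then show ?thesis
      by (intro affine_onI[where c = 0 and d = 1]) (simp add: \<open>m = 0\<close> schauder_0_0)
  next
    case False
    then show ?thesis
      by (intro affine_onI[where c = 0 and d = 0]) (simp add: \<open>m = 0\<close> schauder_index_0_eq_0)
  qed
qed

lemma affine_on_schauder_block:
  "affine_on {real k / 2^(p+1) .. (real k + 1) / 2^(p+1)} (schauder_block (int p) f)"
  unfolding schauder_block_def[abs_def]
  by (rule affine_on_sum, rule affine_on_scaleR_left, rule affine_on_schauder)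

section \<open>Sup-norm bounds for Schauder blocks\<close>

lemma abs_schauder_le_1:
  assumes "-1 \<le> i" and t: "t \<in> {0..1}"
  shows "\<bar>schauder i m t\<bar> \<le> 1"
proof (cases "i = -1")
  case False
  with assms(1) obtain p where i: "i = int p"
    using nonneg_int_cases[of i] by fastforce
  show ?thesis
  proof (cases "1 \<le> m")
    case True
    have "0 \<le> tent (2^p * t + 1 - real m)" "tent (2^p * t + 1 - real m) \<le> 1/2"
      by (rule tent_nonneg, rule tent_le_half)
    then show ?thesis
      by (simp add: i schauder_eq_tent[OF True])
  next
    case False
    then have "m = 0"
      by simp
    then show ?thesis
      using t by (cases "p = 0") (simp_all add: i schauder_0_0 schauder_index_0_eq_0)
  qed
qed simp

lemma norm_schauder_block_le_sum:
  assumes "-1 \<le> i" "t \<in> {0..1}"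
  shows "norm (schauder_block i f t) \<le> (\<Sum>m\<in>schauder_idx i. norm (schauder_coeff f i m))"
  unfolding schauder_block_def
proof (rule order_trans[OF norm_sum sum_mono])
  fix m
  have "\<bar>schauder i m t\<bar> * norm (schauder_coeff f i m) \<le> 1 * norm (schauder_coeff f i m)"
    by (rule mult_right_mono[OF abs_schauder_le_1[OF assms]]) simp
  then show "norm (schauder i m t *\<^sub>R schauder_coeff f i m) \<le> norm (schauder_coeff f i m)"
    by simp
qed

lemma norm_schauder_block_le_supnorm01:
  assumes "-1 \<le> i" "t \<in> {0..1}"
  shows "norm (schauder_block i f t) \<le> supnorm01 (schauder_block i f)"
  unfolding supnorm01_def
  using norm_schauder_block_le_sum[OF assms(1)] by (intro cSUP_upper[OF assms(2)] bdd_aboveI2)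

lemma supnorm01_schauder_block_nonneg: "-1 \<le> i \<Longrightarrow> 0 \<le> supnorm01 (schauder_block i f)"
  by (rule order_trans[OF norm_ge_zero norm_schauder_block_le_supnorm01[of i 0]]) simp_all

lemma supnorm01_le: "(\<And>t. t \<in> {0..1} \<Longrightarrow> norm (g t) \<le> B) \<Longrightarrow> supnorm01 g \<le> B"
  unfolding supnorm01_def by (rule cSUP_least) auto

lemma sum_le_of_at_most_one_pos:
  fixes g :: "'a \<Rightarrow> real"
  assumes M: "finite M" and g: "\<And>m. m \<in> M \<Longrightarrow> 0 \<le> g m \<and> g m \<le> B" and "0 \<le> B"
    and uniq: "\<And>m m'. m \<in> M \<Longrightarrow> m' \<in> M \<Longrightarrow> 0 < g m \<Longrightarrow> 0 < g m' \<Longrightarrow> m = m'"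
  shows "sum g M \<le> B"
proof (cases "\<exists>m\<in>M. 0 < g m")
  case True
  then obtain m where m: "m \<in> M" "0 < g m"
    by blast
  have "sum g M = g m + sum g (M - {m})"
    by (rule sum.remove[OF M m(1)])
  also have "sum g (M - {m}) = 0"
  proof (rule sum.neutral, intro ballI)
    fix m'
    assume m': "m' \<in> M - {m}"
    then have "\<not> 0 < g m'"
      using uniq[of m' m] m by auto
    then show "g m' = 0"
      using g[of m'] m' by auto
  qed
  finally show ?thesis
    using g[OF m(1)] by simp
next
  case False
  then have "sum g M = 0"
    using g by (intro sum.neutral) force
  with \<open>0 \<le> B\<close> show ?thesis
    by simp
qed

lemma sum_tent_le_half: "finite M \<Longrightarrow> (\<Sum>m\<in>M. tent (y - real m)) \<le> 1/2"
  by (rule sum_le_of_at_most_one_pos, assumption, rule conjI[OF tent_nonneg tent_le_half], simp,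
      rule tent_pos_unique)

lemma norm_schauder_block_le_twice_coeff:
  assumes i: "-1 \<le> i" and t: "t \<in> {0..1}"
    and coeff: "\<And>m. m \<in> schauder_idx i \<Longrightarrow> norm (schauder_coeff f i m) \<le> B"
  shows "norm (schauder_block i f t) \<le> 2 * B"
proof -
  have "0 \<in> schauder_idx i"
    by (simp add: schauder_idx_def)
  then have B: "0 \<le> B"
    by (rule order_trans[OF norm_ge_zero coeff])
  show ?thesis
  proof (cases "i = -1")
    case True
    then show ?thesis
      using coeff[of 0] B by (simp add: schauder_block_def schauder_idx_def)
  next
    case False
    with i obtain p where p: "i = int p"
      using nonneg_int_cases[of i] by fastforce
    let ?term = "\<lambda>m. schauder i m t *\<^sub>R schauder_coeff f i m"
    have "schauder_idx i = insert 0 {1..2^p}"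
      by (auto simp: schauder_idx_def p)
    then have "schauder_block i f t = ?term 0 + (\<Sum>m\<in>{1..2^p}. ?term m)"
      by (simp add: schauder_block_def)
    then have "norm (schauder_block i f t) \<le> norm (?term 0) + norm (\<Sum>m\<in>{1..2^p}. ?term m)"
      by (simp only: norm_triangle_ineq)
    also have "norm (?term 0) \<le> 1 * B"
      using mult_mono[OF abs_schauder_le_1[OF i t] coeff[of 0]] by (simp add: schauder_idx_def)
    also have "norm (\<Sum>m\<in>{1..2^p}. ?term m) \<le> (\<Sum>m\<in>{1..2^p}. tent (2^p * t + 1 - real m) * B)"
    proof (rule order_trans[OF norm_sum sum_mono])
      fix m :: nat
      assume "m \<in> {1..2^p}"
      then show "norm (?term m) \<le> tent (2^p * t + 1 - real m) * B"
        using coeff[of m] tent_nonneg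
        by (simp add: p schauder_eq_tent schauder_idx_def mult_left_mono)
    qed
    also have "\<dots> = (\<Sum>m\<in>{1..2^p}. tent (2^p * t + 1 - real m)) * B"
      by (simp add: sum_distrib_right)
    also have "\<dots> \<le> 1/2 * B"
      by (rule mult_right_mono[OF sum_tent_le_half B]) simp
    finally show ?thesis
      using B by simp
  qed
qed

section \<open>Vanishing on dyadic grids\<close>

lemma schauder_dyadic_eq_0: "1 \<le> m \<Longrightarrow> schauder (int p) m (real j / 2^p) = 0"
proof -
  have "2^p * (real j / 2^p) + 1 - real m = of_int (int j + 1 - int m)"
    by simp
  then show "1 \<le> m \<Longrightarrow> ?thesis"
    by (simp only: schauder_eq_tent tent_of_int)
qed

lemma schauder_at_0: "schauder (int p) m 0 = 0"
proof (cases "1 \<le> m")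
  case True
  then show ?thesis
    using schauder_dyadic_eq_0[of m p 0] by simp
next
  case False
  then have "m = 0"
    by simp
  then show ?thesis
    by (cases "p = 0") (simp_all add: schauder_0_0 schauder_index_0_eq_0)
qed

lemma schauder_block_at_0: "0 \<le> p \<Longrightarrow> schauder_block p f 0 = 0"
  by (cases p) (simp_all add: schauder_block_def schauder_at_0)

lemma schauder_block_dyadic_eq_0:
  assumes "1 \<le> p"
  shows "schauder_block (int p) f (real j / 2^p) = 0"
proof -
  have "schauder (int p) m (real j / 2^p) = 0" for m
    using assms by (cases "m = 0") (simp_all add: schauder_dyadic_eq_0 schauder_index_0_eq_0)
  then show ?thesis
    by (simp add: schauder_block_def)
qed

lemma schauder_block_coarse_dyadic_eq_0:
  assumes "i < p"
  shows "schauder_block (int p) f (real j / 2^(i+1)) = 0"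
proof -
  obtain e where p: "p = Suc i + e"
    using assms less_iff_Suc_add by blast
  have "real j / 2^(i+1) = real (j * 2^e) / 2^p"
    by (simp add: p power_add)
  moreover have "1 \<le> p"
    by (simp add: p)
  ultimately show ?thesis
    by (simp only: schauder_block_dyadic_eq_0)
qed

lemma schauder_coeff_eq_0_of_dyadic:
  assumes f: "\<And>j. f (real j / 2^(p+1)) = 0"
  shows "schauder_coeff f (int p) m = 0"
proof (cases "m = 0")
  case True
  have "f 1 = 0" "f 0 = 0"
    using f[of "2^(p+1)"] f[of 0] by simp_all
  with True show ?thesis
    by (simp add: schauder_coeff_def)
next
  case False
  have "tt0 p m = real (2 * (m - 1)) / 2^(p+1)" "tt1 p m = real (2 * m - 1) / 2^(p+1)"
    "tt2 p m = real (2 * m) / 2^(p+1)"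
    using False by (simp_all add: tt0_def tt1_def tt2_def of_nat_diff field_simps)
  then have "f (tt0 p m) = 0" "f (tt1 p m) = 0" "f (tt2 p m) = 0"
    by (simp_all only: f)
  with False show ?thesis
    by (simp add: schauder_coeff_def)
qed

section \<open>Coefficients and local affinity\<close>

lemma dyadic_points_in_unit_interval:
  assumes "1 \<le> m" "m \<le> 2^p"
  shows "0 \<le> tt0 p m" "tt0 p m \<le> tt1 p m" "tt1 p m \<le> tt2 p m" "tt2 p m \<le> 1"
proof -
  have "real m \<le> 2^p"
    using assms(2) by (metis of_nat_le_iff of_nat_numeral of_nat_power)
  then show "0 \<le> tt0 p m" "tt0 p m \<le> tt1 p m" "tt1 p m \<le> tt2 p m" "tt2 p m \<le> 1"
    using assms(1) by (simp_all add: tt0_def tt1_def tt2_def field_simps)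
qed

lemma norm_schauder_coeff_le:
  assumes f: "\<And>s. s \<in> {0..1} \<Longrightarrow> norm (f s) \<le> K" and i: "-1 \<le> i" and m: "m \<in> schauder_idx i"
  shows "norm (schauder_coeff f i m) \<le> 4 * K"
proof -
  have K: "0 \<le> K"
    using f[of 0] by (simp add: order_trans[OF norm_ge_zero])
  have "norm (f 1 - f 0) \<le> 2 * K"
    using norm_triangle_ineq4[of "f 1" "f 0"] f[of 0] f[of 1] by simp
  moreover have "norm (2 *\<^sub>R f (tt1 p' m) - f (tt0 p' m) - f (tt2 p' m)) \<le> 4 * K"
    if "i = int p'" "m \<noteq> 0" for p'
  proof -
    have "1 \<le> m" "m \<le> 2^p'"
      using m that by (auto simp: schauder_idx_def)
    note points = dyadic_points_in_unit_interval[OF this]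
    have "norm (2 *\<^sub>R f (tt1 p' m) - f (tt0 p' m) - f (tt2 p' m))
        \<le> 2 * norm (f (tt1 p' m)) + norm (f (tt0 p' m)) + norm (f (tt2 p' m))"
      by (rule order_trans[OF norm_triangle_ineq4 add_right_mono[OF order_trans[OF norm_triangle_ineq4]]]) simp
    also have "\<dots> \<le> 2 * K + K + K"
      using points by (intro add_mono mult_left_mono f) simp_all
    finally show ?thesis
      by simp
  qed
  ultimately show ?thesis
    using i f[of 0] K nonneg_int_cases[of i] by (cases "i = -1") (auto simp: schauder_coeff_def)
qed

lemma coarse_dyadic_interval_around:
  assumes "p < i" "1 \<le> m" "m \<le> 2^i"
  obtains k :: nat where "real k / 2^(p+1) \<le> tt0 i m" "tt2 i m \<le> (real k + 1) / 2^(p+1)"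
    "real k + 1 \<le> 2^(p+1)"
proof -
  obtain e where i: "i = Suc p + e"
    using assms(1) less_iff_Suc_add by blast
  define d :: nat where "d = 2^e"
  define k where "k = (m - 1) div d"
  have d: "0 < d" "(2::nat)^i = 2^(p+1) * d"
    by (simp_all add: d_def i power_add)
  have "k * d + (m - 1) mod d = m - 1" "(m - 1) mod d < d"
    using d(1) by (simp_all add: k_def)
  then have nat_bounds: "k * d + 1 \<le> m" "m \<le> (k + 1) * d"
    using assms(2) by (simp_all add: distrib_right)
  then have "k * d < 2^(p+1) * d"
    using assms(3) d(2) by linarith
  then have "k < 2^(p+1)"
    by simp
  have "real (k * d + 1) \<le> real m" "real m \<le> real ((k + 1) * d)"
    using nat_bounds by (simp_all only: of_nat_le_iff)
  then have km: "real (k * d) \<le> real m - 1" "real m \<le> real ((k + 1) * d)"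
    by simp_all
  have pow: "(2::real)^i = 2^(p+1) * real d"
    using arg_cong[OF d(2), of real] by simp
  have "real k / 2^(p+1) = real (k * d) / 2^i"
    using d(1) by (simp add: pow)
  also have "\<dots> \<le> tt0 i m"
    unfolding tt0_def by (rule divide_right_mono[OF km(1)]) simp
  finally have lower: "real k / 2^(p+1) \<le> tt0 i m" .
  have "tt2 i m \<le> real ((k + 1) * d) / 2^i"
    unfolding tt2_def by (rule divide_right_mono[OF km(2)]) simp
  also have "\<dots> = (real k + 1) / 2^(p+1)"
    using d(1) by (simp add: pow field_simps)
  finally have upper: "tt2 i m \<le> (real k + 1) / 2^(p+1)" .
  have "real (k + 1) \<le> real (2^(p+1))"
    using \<open>k < 2^(p+1)\<close> by (simp only: of_nat_le_iff Suc_eq_plus1[symmetric] Suc_le_eq)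
  then have "real k + 1 \<le> 2^(p+1)"
    by simp
  with lower upper show thesis
    by (rule that)
qed

lemma schauder_block_affine_around:
  assumes p: "-1 \<le> p" "p < int i" and m: "1 \<le> m" "m \<le> 2^i"
  obtains a b where "0 \<le> a" "a \<le> tt0 i m" "tt2 i m \<le> b" "b \<le> 1"
    "b - a = 2 powr - real_of_int (p + 1)" "affine_on {a..b} (schauder_block p f)"
proof (cases "p = -1")
  case True
  have "affine_on {0..1} (schauder_block p f)"
    by (rule affine_onI[where c = "f 0" and d = 0]) (simp add: True schauder_block_def schauder_idx_def schauder_coeff_def)
  with True show thesis
    using dyadic_points_in_unit_interval[OF m] by (intro that[of 0 1]) auto
next
  case False
  with p(1) obtain p' where p': "p = int p'"
    using nonneg_int_cases[of p] by fastforce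
  then obtain k :: nat where k: "real k / 2^(p'+1) \<le> tt0 i m" "tt2 i m \<le> (real k + 1) / 2^(p'+1)"
    "real k + 1 \<le> 2^(p'+1)"
    using coarse_dyadic_interval_around[OF _ m] p(2) by auto
  have "2 powr - real_of_int (p + 1) = 2 powr - real (p' + 1)"
    by (simp add: p' algebra_simps)
  also have "\<dots> = 1 / 2^(p'+1)"
    by (simp only: powr_minus_divide powr_realpow[OF zero_less_numeral])
  also have "\<dots> = (real k + 1) / 2^(p'+1) - real k / 2^(p'+1)"
    by (simp add: diff_divide_distrib[symmetric])
  finally have "(real k + 1) / 2^(p'+1) - real k / 2^(p'+1) = 2 powr - real_of_int (p + 1)" ..
  moreover have "0 \<le> real k / 2^(p'+1)" "(real k + 1) / 2^(p'+1) \<le> 1"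
    using k(3) by simp_all
  moreover have "affine_on {real k / 2^(p'+1) .. (real k + 1) / 2^(p'+1)} (schauder_block p f)"
    unfolding p' by (rule affine_on_schauder_block)
  ultimately show thesis
    using k(1,2) by (intro that)
qed

lemma schauder_block_midpoint:
  assumes "-1 \<le> p" "p < int i" "1 \<le> m" "m \<le> 2^i"
  shows "2 *\<^sub>R schauder_block p f (tt1 i m) = schauder_block p f (tt0 i m) + schauder_block p f (tt2 i m)"
proof -
  obtain a b where ab: "0 \<le> a" "a \<le> tt0 i m" "tt2 i m \<le> b" "affine_on {a..b} (schauder_block p f)"
    using schauder_block_affine_around[OF assms] by metis
  have "tt1 i m = (tt0 i m + tt2 i m) / 2"
    by (simp add: tt0_def tt1_def tt2_def field_simps)
  moreover have "tt0 i m \<in> {a..b}" "tt2 i m \<in> {a..b}" "(tt0 i m + tt2 i m) / 2 \<in> {a..b}"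
    using ab dyadic_points_in_unit_interval[OF assms(3,4)] by auto
  ultimately show ?thesis
    by (simp only:) (rule affine_on_midpoint[OF ab(4)])
qed

lemma norm_schauder_block_diff_le:
  assumes p: "-1 \<le> p" "p < int i" and m: "1 \<le> m" "m \<le> 2^i"
  shows "norm (schauder_block p f (tt2 i m) - schauder_block p f (tt0 i m))
    \<le> 2 powr real_of_int (p + 2 - int i) * supnorm01 (schauder_block p f)"
proof -
  let ?g = "schauder_block p f"
  obtain a b where ab: "0 \<le> a" "a \<le> tt0 i m" "tt2 i m \<le> b" "b \<le> 1"
    "b - a = 2 powr - real_of_int (p + 1)" "affine_on {a..b} ?g"
    using schauder_block_affine_around[OF assms] by metis
  note points = dyadic_points_in_unit_interval[OF m]
  have len: "tt2 i m - tt0 i m = 2 powr - real i"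
    by (simp add: tt0_def tt2_def powr_minus_divide powr_realpow diff_divide_distrib[symmetric])
  have "norm (?g b - ?g a) \<le> norm (?g b) + norm (?g a)"
    by (rule norm_triangle_ineq4)
  also have "\<dots> \<le> 2 * supnorm01 ?g"
    using ab points norm_schauder_block_le_supnorm01[OF p(1), of a f] norm_schauder_block_le_supnorm01[OF p(1), of b f]
    by simp
  finally have ends: "norm (?g b - ?g a) \<le> 2 * supnorm01 ?g" .
  have "?g (tt2 i m) - ?g (tt0 i m) = ((tt2 i m - tt0 i m) / (b - a)) *\<^sub>R (?g b - ?g a)"
    using ab points by (intro affine_on_diff[OF ab(6)]) auto
  also have "(tt2 i m - tt0 i m) / (b - a) = 2 powr real_of_int (p + 1 - int i)"
    unfolding len ab(5) powr_diff[symmetric] by (rule arg_cong[where f = "(powr) 2"]) simp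
  finally have "norm (?g (tt2 i m) - ?g (tt0 i m)) = 2 powr real_of_int (p + 1 - int i) * norm (?g b - ?g a)"
    by simp
  also have "\<dots> \<le> 2 powr real_of_int (p + 1 - int i) * (2 * supnorm01 ?g)"
    by (rule mult_left_mono[OF ends]) simp
  also have "\<dots> = 2 powr (real_of_int (p + 1 - int i) + 1) * supnorm01 ?g"
    by (simp only: powr_add powr_one[of 2] zero_le_numeral mult.assoc)
  also have "real_of_int (p + 1 - int i) + 1 = real_of_int (p + 2 - int i)"
    by simp
  finally show ?thesis .
qed

section \<open>Products of Schauder blocks\<close>

lemma blinfun_second_difference:
  fixes V0 V1 V2 :: "'a::real_normed_vector \<Rightarrow>\<^sub>L 'b::real_normed_vector"
  assumes "2 *\<^sub>R V1 = V0 + V2" "2 *\<^sub>R W1 = W0 + W2"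
  shows "2 *\<^sub>R V1 W1 - V0 W0 - V2 W2 = - ((1/2) *\<^sub>R (V2 - V0) (W2 - W0))"
proof -
  have "V1 = (1/2) *\<^sub>R (V0 + V2)" "W1 = (1/2) *\<^sub>R (W0 + W2)"
    using arg_cong[OF assms(1), of "scaleR (1/2)"] arg_cong[OF assms(2), of "scaleR (1/2)"] by simp_all
  moreover have "(1/2) *\<^sub>R x + ((1/2) *\<^sub>R x + ((1/2) *\<^sub>R y + (1/2) *\<^sub>R y)) = x + y" for x y :: 'b
    by (simp add: add.assoc[symmetric] scaleR_add_left[symmetric])
  ultimately show ?thesis
    by (simp add: blinfun.add_left blinfun.add_right blinfun.diff_left blinfun.diff_right
        blinfun.scaleR_left blinfun.scaleR_right algebra_simps)
qed

definition schauder_product ::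
    "int \<Rightarrow> (real \<Rightarrow> 'a::real_normed_vector \<Rightarrow>\<^sub>L 'b::real_normed_vector) \<Rightarrow> int \<Rightarrow> (real \<Rightarrow> 'a) \<Rightarrow> real \<Rightarrow> 'b"
  where "schauder_product p v q w t = schauder_block p v t (schauder_block q w t)"

lemma norm_schauder_product_le:
  assumes "-1 \<le> p" "-1 \<le> q" "t \<in> {0..1}"
  shows "norm (schauder_product p v q w t)
    \<le> supnorm01 (schauder_block p v) * supnorm01 (schauder_block q w)"
  unfolding schauder_product_def
  using assms
  by (intro order_trans[OF norm_blinfun] mult_mono norm_schauder_block_le_supnorm01
      supnorm01_schauder_block_nonneg norm_ge_zero)

lemma supnorm01_schauder_block_product_le:
  assumes "-1 \<le> i" "-1 \<le> p" "-1 \<le> q"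
  shows "supnorm01 (schauder_block i (schauder_product p v q w))
    \<le> 8 * supnorm01 (schauder_block p v) * supnorm01 (schauder_block q w)"
proof (rule supnorm01_le)
  fix t :: real
  assume "t \<in> {0..1}"
  have "norm (schauder_block i (schauder_product p v q w) t)
      \<le> 2 * (4 * (supnorm01 (schauder_block p v) * supnorm01 (schauder_block q w)))"
    using assms by (intro norm_schauder_block_le_twice_coeff norm_schauder_coeff_le
        norm_schauder_product_le \<open>t \<in> {0..1}\<close>)
  then show "norm (schauder_block i (schauder_product p v q w) t)
      \<le> 8 * supnorm01 (schauder_block p v) * supnorm01 (schauder_block q w)"
    by simp
qed

lemma norm_schauder_coeff_product_le:
  assumes p: "-1 \<le> p" "p < int i" and q: "-1 \<le> q" "q < int i" and m: "m \<in> schauder_idx (int i)"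
  shows "norm (schauder_coeff (schauder_product p v q w) (int i) m)
    \<le> 8 * 2 powr real_of_int (p + q - 2 * int i) * supnorm01 (schauder_block p v) * supnorm01 (schauder_block q w)"
    (is "_ \<le> 8 * ?r * ?A * ?B")
proof (cases "m = 0")
  case True
  \<comment> \<open>The coefficient vanishes: for \<open>i \<ge> 1\<close> by definition, for \<open>i = 0\<close> because both factors are constant.\<close>
  have "0 \<le> 8 * ?r * ?A * ?B"
    by (intro mult_nonneg_nonneg supnorm01_schauder_block_nonneg p(1) q(1)) simp_all
  moreover have "p = -1" "q = -1" if "i = 0"
    using p q that by simp_all
  ultimately show ?thesis
    using True by (auto simp: schauder_coeff_def schauder_product_def schauder_block_def schauder_idx_def)
next
  case False
  then have m: "1 \<le> m" "m \<le> 2^i"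
    using m by (auto simp: schauder_idx_def)
  let ?dv = "schauder_block p v (tt2 i m) - schauder_block p v (tt0 i m)"
  let ?dw = "schauder_block q w (tt2 i m) - schauder_block q w (tt0 i m)"
  have "schauder_coeff (schauder_product p v q w) (int i) m = - ((1/2) *\<^sub>R ?dv ?dw)"
    using False by (simp add: schauder_coeff_def schauder_product_def blinfun_second_difference
        schauder_block_midpoint[OF p m] schauder_block_midpoint[OF q m])
  then have "norm (schauder_coeff (schauder_product p v q w) (int i) m) \<le> 1/2 * (norm ?dv * norm ?dw)"
    using norm_blinfun[of ?dv ?dw] by simp
  also have "\<dots> \<le> 1/2 * ((2 powr real_of_int (p + 2 - int i) * ?A) * (2 powr real_of_int (q + 2 - int i) * ?B))"
    by (intro mult_left_mono mult_mono norm_schauder_block_diff_le mult_nonneg_nonneg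
        supnorm01_schauder_block_nonneg p q m) simp_all
  also have "\<dots> = 8 * ?r * ?A * ?B"
  proof -
    have "real_of_int (p + 2 - int i) + real_of_int (q + 2 - int i) = real_of_int (p + q - 2 * int i) + 4"
      by simp
    then have "2 powr real_of_int (p + 2 - int i) * 2 powr real_of_int (q + 2 - int i) = ?r * 2 powr 4"
      by (simp only: powr_add[symmetric])
    then show ?thesis
      by (simp add: powr_numeral algebra_simps)
  qed
  finally show ?thesis .
qed

lemma supnorm01_schauder_block_product_le_fine:
  assumes "-1 \<le> p" "p < int i" "-1 \<le> q" "q < int i"
  shows "supnorm01 (schauder_block (int i) (schauder_product p v q w))
    \<le> 16 * 2 powr real_of_int (p + q - 2 * int i) * supnorm01 (schauder_block p v) * supnorm01 (schauder_block q w)"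
proof (rule supnorm01_le)
  fix t :: real
  assume "t \<in> {0..1}"
  then show "norm (schauder_block (int i) (schauder_product p v q w) t)
    \<le> 16 * 2 powr real_of_int (p + q - 2 * int i) * supnorm01 (schauder_block p v) * supnorm01 (schauder_block q w)"
    using norm_schauder_block_le_twice_coeff[OF _ _ norm_schauder_coeff_product_le[OF assms]]
    by (simp add: mult.assoc)
qed

lemma schauder_product_eq_0:
  "schauder_block p v t = 0 \<or> schauder_block q w t = 0 \<Longrightarrow> schauder_product p v q w t = 0"
  by (auto simp: schauder_product_def blinfun.zero_left blinfun.zero_right)

lemma schauder_block_product_eq_0:
  assumes i: "-1 \<le> i" and pq: "i < p \<or> i < q"
  shows "schauder_block i (schauder_product p v q w) t = 0"
proof -
  have "schauder_coeff (schauder_product p v q w) i m = 0" for m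
  proof (cases "i = -1")
    case True
    then have "0 \<le> p \<or> 0 \<le> q"
      using pq by linarith
    then have "schauder_product p v q w 0 = 0"
      by (auto intro: schauder_product_eq_0 simp: schauder_block_at_0)
    with True show ?thesis
      by (simp add: schauder_coeff_def)
  next
    case False
    with i obtain i' where i': "i = int i'"
      using nonneg_int_cases[of i] by fastforce
    have "schauder_product p v q w (real j / 2^(i'+1)) = 0" for j
    proof (rule schauder_product_eq_0)
      show "schauder_block p v (real j / 2^(i'+1)) = 0 \<or> schauder_block q w (real j / 2^(i'+1)) = 0"
        using pq i' schauder_block_coarse_dyadic_eq_0[of i' "nat p" v j]
          schauder_block_coarse_dyadic_eq_0[of i' "nat q" w j]
        by (cases "i < p") auto
    qed
    then show ?thesis
      unfolding i' by (rule schauder_coeff_eq_0_of_dyadic)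
  qed
  then show ?thesis
    by (simp add: schauder_block_def)
qed

theorem mainTheorem6:
  "\<exists>C::real. \<forall>(i::int) (p::int) (q::int)
      (v :: real \<Rightarrow> ('d::euclidean_space \<Rightarrow>\<^sub>L 'n::euclidean_space)) (w :: real \<Rightarrow> 'd).
     i \<ge> -1 \<longrightarrow> p \<ge> -1 \<longrightarrow> q \<ge> -1 \<longrightarrow>
     continuous_on {0..1} v \<longrightarrow> continuous_on {0..1} w \<longrightarrow>
     (let P = (\<lambda>t. blinfun_apply (schauder_block p v t) (schauder_block q w t)) in
       (max p q \<le> i \<longrightarrow>
          (if (i = q \<and> q > p) \<or> (i = p \<and> p > q)
           then supnorm01 (schauder_block i P)
                  \<le> C * supnorm01 (schauder_block p v) * supnorm01 (schauder_block q w)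
           else supnorm01 (schauder_block i P)
                  \<le> C * 2 powr (real_of_int (- max i (max p q) - i + p + q))
                      * supnorm01 (schauder_block p v) * supnorm01 (schauder_block q w)))
       \<and> ((p > i \<or> q > i) \<longrightarrow> (\<forall>t\<in>{0..1}. schauder_block i P t = 0)))"
proof (intro exI[of _ 16] allI impI)
  fix i p q :: int and v :: "real \<Rightarrow> ('d \<Rightarrow>\<^sub>L 'n)" and w :: "real \<Rightarrow> 'd"
  assume i: "-1 \<le> i" and p: "-1 \<le> p" and q: "-1 \<le> q"
  let ?A = "supnorm01 (schauder_block p v)" and ?B = "supnorm01 (schauder_block q w)"
  let ?N = "supnorm01 (schauder_block i (schauder_product p v q w))"
  have P: "(\<lambda>t. blinfun_apply (schauder_block p v t) (schauder_block q w t)) = schauder_product p v q w"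
    by (simp add: fun_eq_iff schauder_product_def)
  have "0 \<le> ?A * ?B"
    by (intro mult_nonneg_nonneg supnorm01_schauder_block_nonneg p q)
  then have coarse: "?N \<le> 16 * ?A * ?B"
    using supnorm01_schauder_block_product_le[OF i p q, of v w] by linarith
  show "let P = (\<lambda>t. blinfun_apply (schauder_block p v t) (schauder_block q w t)) in
    (max p q \<le> i \<longrightarrow>
      (if (i = q \<and> q > p) \<or> (i = p \<and> p > q) then supnorm01 (schauder_block i P) \<le> 16 * ?A * ?B
       else supnorm01 (schauder_block i P) \<le> 16 * 2 powr (real_of_int (- max i (max p q) - i + p + q)) * ?A * ?B))
    \<and> ((p > i \<or> q > i) \<longrightarrow> (\<forall>t\<in>{0..1}. schauder_block i P t = 0))"
    unfolding Let_def P
  proof (intro conjI impI)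
    assume "max p q \<le> i"
    then consider "p < i" "q < i" | "p = i" "q = i" | "(i = q \<and> q > p) \<or> (i = p \<and> p > q)"
      by linarith
    then show "if (i = q \<and> q > p) \<or> (i = p \<and> p > q) then ?N \<le> 16 * ?A * ?B
      else ?N \<le> 16 * 2 powr (real_of_int (- max i (max p q) - i + p + q)) * ?A * ?B"
    proof cases
      case 1
      then obtain i' where i': "i = int i'"
        using p nonneg_int_cases[of i] by fastforce
      have e: "- max i (max p q) - i + p + q = p + q - 2 * int i'"
        using 1 i' by simp
      show ?thesis
        using 1 supnorm01_schauder_block_product_le_fine[OF p _ q, of i' v w] unfolding e by (simp add: i')
    qed (use coarse in simp_all)
  next
    show "\<forall>t\<in>{0..1}. schauder_block i (schauder_product p v q w) t = 0" if "i < p \<or> i < q"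
      using schauder_block_product_eq_0[OF i that] by blast
  qed
qed

end
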